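(* Let $\mathbb{F}$ be a field, $n\geq 1$, and let $\theta$ be a symplectic polarity of the projective space $\Delta=\mathsf{PG}(2n-1,\mathbb{F})$, viewed as a building of type $\mathsf{A}_{2n-1}$. Then for each odd $i$, no vertex of type $i$ is mapped by $\theta$ to an opposite vertex; and each vertex mapped to an opposite vertex is contained in a simplex of type $\{2,4,\ldots,2n-2\}$ that is mapped to an opposite simplex.
   Context: Vertices of type $i$ ($1\leq i\leq 2n-1$) of $\mathsf{PG}(2n-1,\mathbb{F})$ are the $i$-dimensional subspaces of $V=\mathbb{F}^{2n}$; simplices are flags. Two subspaces $U,U'$ are opposite iff $U+U'=V$ and $U\cap U'=0$; flags are opposite iff their members are pairwise opposite in this sense with complementary dimensions (equivalently, as simplices of the building). A symplectic polarity is a duality of the form $U^\theta=U^{\circ}=\{v: (u,v)=0\ \forall u\in U\}$ for a nondegenerate alternating form $(\cdot,\cdot)$ on $V$. *)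

theory Defs
  imports "HOL-Analysis.Analysis"
begin

text \<open>V = F^(2n) is modelled as the type 'a ^ 'm with 'a a field and CARD('m) = 2n.\<close>

definition alt_form :: "('a::field ^ 'm \<Rightarrow> 'a ^ 'm \<Rightarrow> 'a) \<Rightarrow> bool" where
  "alt_form B \<longleftrightarrow>
     (\<forall>x y z. B (x + y) z = B x z + B y z) \<and>
     (\<forall>x y z. B x (y + z) = B x y + B x z) \<and>
     (\<forall>c x y. B (c *s x) y = c * B x y) \<and>
     (\<forall>c x y. B x (c *s y) = c * B x y) \<and>
     (\<forall>x. B x x = 0)"

definition nondegenerate :: "('a::field ^ 'm \<Rightarrow> 'a ^ 'm \<Rightarrow> 'a) \<Rightarrow> bool" where
  "nondegenerate B \<longleftrightarrow> (\<forall>x. (\<forall>y. B x y = 0) \<longrightarrow> x = 0)"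

text \<open>The symplectic polarity: U maps to U-perp.\<close>
definition perp :: "('a::field ^ 'm \<Rightarrow> 'a ^ 'm \<Rightarrow> 'a) \<Rightarrow> ('a ^ 'm) set \<Rightarrow> ('a ^ 'm) set" where
  "perp B U = {v. \<forall>u\<in>U. B u v = 0}"

definition vertex :: "('a::field ^ 'm) set \<Rightarrow> bool" where
  "vertex U \<longleftrightarrow> vec.subspace U \<and> 1 \<le> vec.dim U \<and> vec.dim U < CARD('m)"

definition opposite :: "('a::field ^ 'm) set \<Rightarrow> ('a ^ 'm) set \<Rightarrow> bool" where
  "opposite U U' \<longleftrightarrow> {u + u' | u u'. u \<in> U \<and> u' \<in> U'} = UNIV \<and> U \<inter> U' = {0}"

text \<open>Simplices are flags: sets of pairwise incident (nested) vertices.\<close>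
definition flag :: "('a::field ^ 'm) set set \<Rightarrow> bool" where
  "flag F \<longleftrightarrow> (\<forall>U\<in>F. vertex U) \<and> (\<forall>U\<in>F. \<forall>W\<in>F. U \<subseteq> W \<or> W \<subseteq> U)"

definition flag_type :: "('a::field ^ 'm) set set \<Rightarrow> nat set" where
  "flag_type F = vec.dim ` F"

definition opposite_flags :: "('a::field ^ 'm) set set \<Rightarrow> ('a ^ 'm) set set \<Rightarrow> bool" where
  "opposite_flags F F' \<longleftrightarrow>
     flag_type F' = (\<lambda>d. CARD('m) - d) ` flag_type F \<and>
     (\<forall>U\<in>F. \<forall>U'\<in>F'. vec.dim U + vec.dim U' = CARD('m) \<longrightarrow> opposite U U')"

end

theory Submission
  imports Defs
begin

text \<open>A subspace W on which the alternating form is nondegenerate (W meets perp W only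
  in 0) has a symplectic basis of hyperbolic pairs (e_i, f_i), built by Gram-Schmidt with the
  projection v \<mapsto> \<Sum> B(e_i,v) f_i - B(f_i,v) e_i; hence dim W is even. A vertex U opposite to
  perp U is such a subspace, so its dimension is even. Extending a symplectic basis of U to
  one of the whole space, the spans W_k of the first k pairs form a flag of type
  {2,4,...,2n-2} through U, and perp W_k is spanned by the remaining pairs, so W_k is
  opposite to perp W_k.\<close>

locale alternating_bilinear =
  fixes B :: "'a::field ^ 'm \<Rightarrow> 'a ^ 'm \<Rightarrow> 'a"
  assumes alternating: "alt_form B"
begin

lemma left_add: "B (x + y) z = B x z + B y z"
  using alternating unfolding alt_form_def by blast

lemma right_add: "B x (y + z) = B x y + B x z"
  using alternating unfolding alt_form_def by blast

lemma left_scale: "B (c *s x) y = c * B x y"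
  using alternating unfolding alt_form_def by blast

lemma right_scale: "B x (c *s y) = c * B x y"
  using alternating unfolding alt_form_def by blast

lemma self_zero: "B x x = 0"
  using alternating unfolding alt_form_def by blast

lemma left_zero [simp]: "B 0 y = 0"
  using left_scale[of 0 0 y] by simp

lemma right_zero [simp]: "B x 0 = 0"
  using right_scale[of x 0 0] by simp

lemma skew: "B x y = - B y x"
proof -
  have "0 = B (x + y) (x + y)" by (simp add: self_zero)
  also have "\<dots> = B x x + B x y + B y x + B y y" by (simp add: left_add right_add)
  finally show ?thesis by (simp add: self_zero eq_neg_iff_add_eq_0 add.commute)
qed

lemma right_neg: "B x (- y) = - B x y"
  using right_scale[of x "-1" y] by simp

lemma left_diff: "B (x - y) z = B x z - B y z"
  using left_add[of x "-y" z] left_scale[of "-1" y z] by simp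

lemma right_diff: "B x (y - z) = B x y - B x z"
  using right_add[of x y "-z"] right_neg by simp

lemma left_sum: "B (sum f S) x = (\<Sum>i\<in>S. B (f i) x)"
  by (induction S rule: infinite_finite_induct) (auto simp: left_add)

lemma right_sum: "B x (sum f S) = (\<Sum>i\<in>S. B x (f i))"
  by (induction S rule: infinite_finite_induct) (auto simp: right_add)

lemma subspace_perp: "vec.subspace (perp B U)"
  unfolding vec.subspace_def perp_def by (auto simp: right_add right_scale)

lemma perp_span: "perp B (vec.span S) = {v. \<forall>s\<in>S. B s v = 0}"
proof
  show "perp B (vec.span S) \<subseteq> {v. \<forall>s\<in>S. B s v = 0}"
    unfolding perp_def using vec.span_base by blast
  show "{v. \<forall>s\<in>S. B s v = 0} \<subseteq> perp B (vec.span S)"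
  proof
    fix v assume "v \<in> {v. \<forall>s\<in>S. B s v = 0}"
    moreover have "vec.subspace {y. B y v = 0}"
      unfolding vec.subspace_def by (auto simp: left_add left_scale)
    ultimately have "vec.span S \<subseteq> {y. B y v = 0}"
      by (intro vec.span_minimal) auto
    then show "v \<in> perp B (vec.span S)" unfolding perp_def by auto
  qed
qed

lemma perp_UNIV:
  assumes "nondegenerate B"
  shows "perp B UNIV = {0}"
proof -
  have "v = 0" if "v \<in> perp B UNIV" for v
    using that assms skew[of v] unfolding perp_def nondegenerate_def by simp
  then show ?thesis unfolding perp_def by auto
qed

definition pair_vecs :: "(('a ^ 'm) \<times> ('a ^ 'm)) set \<Rightarrow> ('a ^ 'm) set" where
  "pair_vecs P = fst ` P \<union> snd ` P"

definition symplectic_pairs :: "(('a ^ 'm) \<times> ('a ^ 'm)) set \<Rightarrow> bool" where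
  "symplectic_pairs P \<longleftrightarrow> finite P \<and>
     (\<forall>p\<in>P. \<forall>q\<in>P. B (fst p) (snd q) = (if p = q then 1 else 0)
        \<and> B (fst p) (fst q) = 0 \<and> B (snd p) (snd q) = 0)"

definition sproj :: "(('a ^ 'm) \<times> ('a ^ 'm)) set \<Rightarrow> 'a ^ 'm \<Rightarrow> 'a ^ 'm" where
  "sproj P v = (\<Sum>p\<in>P. B (fst p) v *s snd p - B (snd p) v *s fst p)"

lemma symplectic_pairs_subset: "symplectic_pairs P \<Longrightarrow> Q \<subseteq> P \<Longrightarrow> symplectic_pairs Q"
  unfolding symplectic_pairs_def using finite_subset by blast

lemma finite_pair_vecs: "symplectic_pairs P \<Longrightarrow> finite (pair_vecs P)"
  unfolding symplectic_pairs_def pair_vecs_def by auto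

lemma B_fst_pair_vec:
  assumes "symplectic_pairs P" "q \<in> P" "v \<in> pair_vecs P"
  shows "B (fst q) v = (if v = snd q then 1 else 0)"
proof -
  have S: "\<And>p. p \<in> P \<Longrightarrow> B (fst q) (snd p) = (if q = p then 1 else 0) \<and> B (fst q) (fst p) = 0"
    using assms(1,2) unfolding symplectic_pairs_def by blast
  from assms(3) consider p where "p \<in> P" "v = fst p" | p where "p \<in> P" "v = snd p"
    unfolding pair_vecs_def by auto
  then show ?thesis
  proof cases
    case 1 then show ?thesis using S[of p] S[of q] assms(2) by auto
  next
    case 2 then show ?thesis using S[of p] S[of q] assms(2) by (cases "p = q") auto
  qed
qed

lemma B_snd_pair_vec:
  assumes "symplectic_pairs P" "q \<in> P" "v \<in> pair_vecs P"
  shows "B (snd q) v = (if v = fst q then -1 else 0)"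
proof -
  have S: "\<And>p. p \<in> P \<Longrightarrow> B (fst p) (snd q) = (if p = q then 1 else 0) \<and> B (snd q) (snd p) = 0"
    using assms(1,2) unfolding symplectic_pairs_def by blast
  from assms(3) consider p where "p \<in> P" "v = fst p" | p where "p \<in> P" "v = snd p"
    unfolding pair_vecs_def by auto
  then show ?thesis
  proof cases
    case 1 then show ?thesis using S[of p] S[of q] assms(2) skew[of "snd q" "fst p"]
      by (cases "p = q") auto
  next
    case 2 then show ?thesis using S[of p] S[of q] assms(2) skew[of "snd q" "fst q"] by auto
  qed
qed

lemma sproj_in_span: "sproj P v \<in> vec.span (pair_vecs P)"
  unfolding sproj_def pair_vecs_def
  by (intro vec.span_sum vec.span_diff vec.span_scale vec.span_base) auto

lemma B_fst_sproj:
  assumes "symplectic_pairs P" "q \<in> P"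
  shows "B (fst q) (sproj P v) = B (fst q) v"
proof -
  have "B (fst q) (sproj P v)
      = (\<Sum>p\<in>P. B (fst p) v * B (fst q) (snd p) - B (snd p) v * B (fst q) (fst p))"
    unfolding sproj_def by (simp add: right_sum right_diff right_scale mult.commute)
  also have "\<dots> = (\<Sum>p\<in>P. if q = p then B (fst p) v else 0)"
    using assms unfolding symplectic_pairs_def by (intro sum.cong) auto
  also have "\<dots> = B (fst q) v" using assms unfolding symplectic_pairs_def by simp
  finally show ?thesis .
qed

lemma B_snd_sproj:
  assumes "symplectic_pairs P" "q \<in> P"
  shows "B (snd q) (sproj P v) = B (snd q) v"
proof -
  have "B (snd q) (sproj P v)
      = (\<Sum>p\<in>P. B (fst p) v * B (snd q) (snd p) - B (snd p) v * B (snd q) (fst p))"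
    unfolding sproj_def by (simp add: right_sum right_diff right_scale mult.commute)
  also have "\<dots> = (\<Sum>p\<in>P. if q = p then B (snd p) v else 0)"
  proof (intro sum.cong refl)
    fix p assume "p \<in> P"
    then show "B (fst p) v * B (snd q) (snd p) - B (snd p) v * B (snd q) (fst p)
        = (if q = p then B (snd p) v else 0)"
      using assms skew[of "snd q" "fst p"] unfolding symplectic_pairs_def by auto
  qed
  also have "\<dots> = B (snd q) v" using assms unfolding symplectic_pairs_def by simp
  finally show ?thesis .
qed

lemma B_pair_vec_diff_sproj:
  assumes "symplectic_pairs P" "s \<in> pair_vecs P"
  shows "B s (v - sproj P v) = 0"
proof -
  from assms(2) obtain q where q: "q \<in> P" "s = fst q \<or> s = snd q"
    unfolding pair_vecs_def by auto
  then show ?thesis using B_fst_sproj[OF assms(1) q(1)] B_snd_sproj[OF assms(1) q(1)]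
    by (auto simp: right_diff)
qed

lemma sproj_eq_0: "(\<And>s. s \<in> pair_vecs P \<Longrightarrow> B s v = 0) \<Longrightarrow> sproj P v = 0"
  unfolding sproj_def pair_vecs_def by (intro sum.neutral) auto

lemma sproj_add: "sproj P (x + y) = sproj P x + sproj P y"
  unfolding sproj_def
  by (simp add: right_add sum.distrib[symmetric] vec.scale_left_distrib algebra_simps)

lemma sproj_scale: "sproj P (c *s x) = c *s sproj P x"
  unfolding sproj_def by (simp add: right_scale vec.scale_sum_right vec.scale_right_diff_distrib)

lemma sproj_pair_vec:
  assumes "symplectic_pairs P" "s \<in> pair_vecs P"
  shows "sproj P s = s"
proof -
  have P: "\<And>p q. p \<in> P \<Longrightarrow> q \<in> P \<Longrightarrow> B (fst p) (snd q) = (if p = q then 1 else 0)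
      \<and> B (fst p) (fst q) = 0 \<and> B (snd p) (snd q) = 0"
    and fin: "finite P"
    using assms(1) unfolding symplectic_pairs_def by blast+
  from assms(2) obtain q where q: "q \<in> P" "s = fst q \<or> s = snd q"
    unfolding pair_vecs_def by auto
  have "sproj P s = (\<Sum>p\<in>P. if p = q then s else 0)"
    unfolding sproj_def
  proof (intro sum.cong refl)
    fix p assume p: "p \<in> P"
    then show "B (fst p) s *s snd p - B (snd p) s *s fst p = (if p = q then s else 0)"
      using q P[OF p q(1)] P[OF q(1) p] skew[of "snd p" "fst q"] by auto
  qed
  also have "\<dots> = s" using fin q(1) by simp
  finally show ?thesis .
qed

lemma sproj_span:
  assumes "symplectic_pairs P" "v \<in> vec.span (pair_vecs P)"
  shows "sproj P v = v"
proof -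
  have "vec.subspace {x. sproj P x = x}"
    unfolding vec.subspace_def using sproj_add sproj_scale sproj_eq_0[of P 0] by auto
  then have "vec.span (pair_vecs P) \<subseteq> {x. sproj P x = x}"
    using sproj_pair_vec[OF assms(1)] by (intro vec.span_minimal) auto
  then show ?thesis using assms(2) by auto
qed

lemma opposite_span_perp:
  assumes "symplectic_pairs P"
  shows "opposite (vec.span (pair_vecs P)) (perp B (vec.span (pair_vecs P)))"
  unfolding opposite_def
proof
  have "v - sproj P v \<in> perp B (vec.span (pair_vecs P))" for v
    unfolding perp_span using B_pair_vec_diff_sproj[OF assms] by auto
  then have "sproj P v + (v - sproj P v)
      \<in> {u + u' |u u'. u \<in> vec.span (pair_vecs P) \<and> u' \<in> perp B (vec.span (pair_vecs P))}" for v
    using sproj_in_span by blast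
  then show "{u + u' |u u'. u \<in> vec.span (pair_vecs P) \<and> u' \<in> perp B (vec.span (pair_vecs P))}
      = UNIV" by auto
next
  have "v = 0" if "v \<in> vec.span (pair_vecs P)" "v \<in> perp B (vec.span (pair_vecs P))" for v
  proof -
    have "sproj P v = 0" using that(2) unfolding perp_span by (intro sproj_eq_0) auto
    then show ?thesis using sproj_span[OF assms that(1)] by simp
  qed
  moreover have "0 \<in> perp B (vec.span (pair_vecs P))" unfolding perp_def by simp
  ultimately show "vec.span (pair_vecs P) \<inter> perp B (vec.span (pair_vecs P)) = {0}"
    using vec.span_zero by auto
qed

lemma independent_pair_vecs:
  assumes "symplectic_pairs P"
  shows "vec.independent (pair_vecs P)"
proof
  assume "vec.dependent (pair_vecs P)"
  then obtain u v where v: "v \<in> pair_vecs P" "u v \<noteq> 0"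
    and comb: "(\<Sum>w\<in>pair_vecs P. u w *s w) = 0"
    using vec.dependent_finite[OF finite_pair_vecs[OF assms]] by auto
  have fin: "finite (pair_vecs P)" using finite_pair_vecs[OF assms] .
  have snd_coeff: "u (snd q) = 0" if q: "q \<in> P" for q
  proof -
    have "0 = B (fst q) (\<Sum>w\<in>pair_vecs P. u w *s w)" using comb by simp
    also have "\<dots> = (\<Sum>w\<in>pair_vecs P. if w = snd q then u w else 0)"
      by (auto simp: right_sum right_scale B_fst_pair_vec[OF assms q] intro!: sum.cong)
    also have "\<dots> = u (snd q)" using fin q unfolding pair_vecs_def by simp
    finally show ?thesis by simp
  qed
  have fst_coeff: "u (fst q) = 0" if q: "q \<in> P" for q
  proof -
    have "0 = B (snd q) (\<Sum>w\<in>pair_vecs P. u w *s w)" using comb by simp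
    also have "\<dots> = (\<Sum>w\<in>pair_vecs P. if w = fst q then - u w else 0)"
      by (auto simp: right_sum right_scale B_snd_pair_vec[OF assms q] intro!: sum.cong)
    also have "\<dots> = - u (fst q)" using fin q unfolding pair_vecs_def by simp
    finally show ?thesis by simp
  qed
  from v snd_coeff fst_coeff show False unfolding pair_vecs_def by auto
qed

lemma card_pair_vecs:
  assumes "symplectic_pairs P"
  shows "card (pair_vecs P) = 2 * card P"
proof -
  have fin: "finite P"
    and B_pairs: "\<And>p q. p \<in> P \<Longrightarrow> q \<in> P \<Longrightarrow> B (fst p) (snd q) = (if p = q then 1 else 0)
      \<and> B (fst p) (fst q) = 0"
    using assms unfolding symplectic_pairs_def by blast+
  have "inj_on fst P"
  proof (rule inj_onI)
    fix p q assume "p \<in> P" "q \<in> P" "fst p = fst q"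
    then show "p = q" using B_pairs[of q p] B_pairs[of p p] by (auto split: if_splits)
  qed
  moreover have "inj_on snd P"
  proof (rule inj_onI)
    fix p q assume "p \<in> P" "q \<in> P" "snd p = snd q"
    then show "p = q" using B_pairs[of p q] B_pairs[of p p] by (auto split: if_splits)
  qed
  moreover have "fst p \<noteq> snd q" if "p \<in> P" "q \<in> P" for p q
    using B_pairs[OF that(2) that(1)] B_pairs[OF that(2) that(2)] by auto
  then have "fst ` P \<inter> snd ` P = {}" by auto
  ultimately show ?thesis unfolding pair_vecs_def
    by (simp add: card_Un_disjoint fin card_image)
qed

lemma dim_span_pair_vecs:
  "symplectic_pairs P \<Longrightarrow> vec.dim (vec.span (pair_vecs P)) = 2 * card P"
  using vec.dim_span_eq_card_independent[OF independent_pair_vecs] card_pair_vecs by simp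

lemma symplectic_pairs_insert:
  assumes "symplectic_pairs P" "\<And>s. s \<in> pair_vecs P \<Longrightarrow> B s e = 0"
    "\<And>s. s \<in> pair_vecs P \<Longrightarrow> B s f = 0" "B e f = 1"
  shows "symplectic_pairs (insert (e, f) P)"
proof -
  have P: "\<And>p q. p \<in> P \<Longrightarrow> q \<in> P \<Longrightarrow> B (fst p) (snd q) = (if p = q then 1 else 0)
      \<and> B (fst p) (fst q) = 0 \<and> B (snd p) (snd q) = 0"
    using assms(1) unfolding symplectic_pairs_def by blast
  have in_pair_vecs: "fst p \<in> pair_vecs P" "snd p \<in> pair_vecs P" if "p \<in> P" for p
    using that unfolding pair_vecs_def by auto
  have new: "(e, f) \<notin> P" using assms(3)[of e] assms(4) in_pair_vecs[of "(e, f)"] by auto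
  have e_left: "B e s = 0" and f_left: "B f s = 0" if "s \<in> pair_vecs P" for s
    using assms(2,3)[OF that] skew[of e s] skew[of f s] by simp_all
  have "B (fst p) (snd q) = (if p = q then 1 else 0) \<and> B (fst p) (fst q) = 0
      \<and> B (snd p) (snd q) = 0" if "p \<in> insert (e, f) P" "q \<in> insert (e, f) P" for p q
  proof (cases "p = (e, f)"; cases "q = (e, f)")
    assume "p = (e, f)" "q = (e, f)"
    then show ?thesis by (simp add: assms(4) self_zero)
  next
    assume "p = (e, f)" "q \<noteq> (e, f)"
    then have "q \<in> P" using that(2) by simp
    then show ?thesis using \<open>p = (e, f)\<close> \<open>q \<noteq> (e, f)\<close>
        e_left[OF in_pair_vecs(1)] e_left[OF in_pair_vecs(2)] f_left[OF in_pair_vecs(2)]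
      by simp
  next
    assume "p \<noteq> (e, f)" "q = (e, f)"
    then have "p \<in> P" using that(1) by simp
    then show ?thesis using \<open>p \<noteq> (e, f)\<close> \<open>q = (e, f)\<close>
        assms(2)[OF in_pair_vecs(1)] assms(3)[OF in_pair_vecs(1)] assms(3)[OF in_pair_vecs(2)]
      by simp
  next
    assume "p \<noteq> (e, f)" "q \<noteq> (e, f)"
    then show ?thesis using that P[of p q] by simp
  qed
  then show ?thesis using assms(1) unfolding symplectic_pairs_def by simp
qed

text \<open>e is the residual of v after projection onto the pairs already chosen; it pairs
  nontrivially with some u in W since it is not in the radical of W, and f is the suitably
  scaled residual of u.\<close>
lemma exists_hyperbolic_pair:
  assumes W: "vec.subspace W" "W \<inter> perp B W = {0}"
    and P: "symplectic_pairs P" "pair_vecs P \<subseteq> W"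
    and v: "v \<in> W" "v \<notin> vec.span (pair_vecs P)"
  obtains e f where "e \<in> W" "f \<in> W" "B e f = 1"
    "\<And>s. s \<in> pair_vecs P \<Longrightarrow> B s e = 0" "\<And>s. s \<in> pair_vecs P \<Longrightarrow> B s f = 0"
proof -
  have span_W: "vec.span (pair_vecs P) \<subseteq> W" using vec.span_minimal[OF P(2) W(1)] .
  have residual_W: "x - sproj P x \<in> W" if "x \<in> W" for x
    using that span_W sproj_in_span[of P x] by (intro vec.subspace_diff[OF W(1)]) auto
  have residual_perp: "B s (x - sproj P x) = 0" if "s \<in> pair_vecs P" for s x
    using B_pair_vec_diff_sproj[OF P(1) that] .
  define e where "e = v - sproj P v"
  have "e \<noteq> 0" unfolding e_def using v(2) sproj_in_span[of P v] by auto
  then have "e \<notin> perp B W" using residual_W[OF v(1)] W(2) unfolding e_def by blast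
  then obtain u where u: "u \<in> W" "B u e \<noteq> 0" unfolding perp_def by auto
  define f0 where "f0 = u - sproj P u"
  have e_perp: "B s e = 0" if "s \<in> pair_vecs P" for s
    unfolding e_def using residual_perp[OF that] .
  have "B (sproj P u) e = (\<Sum>p\<in>P. B (fst p) u * B (snd p) e - B (snd p) u * B (fst p) e)"
    unfolding sproj_def by (simp add: left_sum left_diff left_scale)
  also have "\<dots> = 0" using e_perp by (intro sum.neutral) (auto simp: pair_vecs_def)
  finally have "B (sproj P u) e = 0" .
  then have f0_e: "B f0 e \<noteq> 0" unfolding f0_def using u(2) by (simp add: left_diff)
  define f where "f = (- inverse (B f0 e)) *s f0"
  show ?thesis
  proof
    show "e \<in> W" unfolding e_def using residual_W[OF v(1)] .
    show "f \<in> W" unfolding f_def f0_def using vec.subspace_scale[OF W(1) residual_W[OF u(1)]] .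
    have "B e f = - inverse (B f0 e) * B e f0" unfolding f_def by (rule right_scale)
    also have "B e f0 = - B f0 e" by (rule skew)
    finally show "B e f = 1" using f0_e by simp
    show "B s e = 0" if "s \<in> pair_vecs P" for s using e_perp[OF that] .
    show "B s f = 0" if "s \<in> pair_vecs P" for s
      unfolding f_def f0_def by (simp only: right_scale residual_perp[OF that] mult_zero_right)
  qed
qed

lemma symplectic_pairs_extend:
  assumes W: "vec.subspace W" "W \<inter> perp B W = {0}"
  shows "symplectic_pairs P \<Longrightarrow> pair_vecs P \<subseteq> W \<Longrightarrow>
    \<exists>Q. P \<subseteq> Q \<and> symplectic_pairs Q \<and> vec.span (pair_vecs Q) = W"
proof (induction "vec.dim W - 2 * card P" arbitrary: P rule: less_induct)
  case less
  show ?case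
  proof (cases "vec.span (pair_vecs P) = W")
    case True
    then show ?thesis using less.prems by blast
  next
    case False
    then obtain v where "v \<in> W" "v \<notin> vec.span (pair_vecs P)"
      using vec.span_minimal[OF less.prems(2) W(1)] by auto
    then obtain e f where ef: "e \<in> W" "f \<in> W" "B e f = 1"
      "\<And>s. s \<in> pair_vecs P \<Longrightarrow> B s e = 0" "\<And>s. s \<in> pair_vecs P \<Longrightarrow> B s f = 0"
      using exists_hyperbolic_pair[OF W less.prems] by blast
    define P' where "P' = insert (e, f) P"
    have P': "symplectic_pairs P'" "pair_vecs P' \<subseteq> W"
      unfolding P'_def using symplectic_pairs_insert[OF less.prems(1) ef(4,5,3)] ef(1,2)
        less.prems(2) by (auto simp: pair_vecs_def)
    have "(e, f) \<notin> P" using ef(5)[of e] ef(3) unfolding pair_vecs_def by force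
    then have "card P' = Suc (card P)"
      unfolding P'_def using less.prems(1) by (simp add: symplectic_pairs_def)
    moreover have "2 * card P' \<le> vec.dim W"
      using vec.independent_card_le_dim[OF P'(2) independent_pair_vecs[OF P'(1)]]
        card_pair_vecs[OF P'(1)] by simp
    ultimately have "vec.dim W - 2 * card P' < vec.dim W - 2 * card P" by simp
    from less.hyps[OF this P'] show ?thesis unfolding P'_def by blast
  qed
qed

lemma perp_span_complement:
  assumes "symplectic_pairs (P \<union> Q)" "P \<inter> Q = {}" "vec.span (pair_vecs (P \<union> Q)) = UNIV"
  shows "perp B (vec.span (pair_vecs P)) = vec.span (pair_vecs Q)"
proof
  have B_pairs: "\<And>p q. p \<in> P \<union> Q \<Longrightarrow> q \<in> P \<union> Q \<Longrightarrow> B (fst p) (snd q) = (if p = q then 1 else 0)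
      \<and> B (fst p) (fst q) = 0 \<and> B (snd p) (snd q) = 0"
    using assms(1) unfolding symplectic_pairs_def by blast
  have "B s t = 0" if "s \<in> pair_vecs P" "t \<in> pair_vecs Q" for s t
  proof -
    from that obtain p q where "p \<in> P" "s = fst p \<or> s = snd p" "q \<in> Q" "t = fst q \<or> t = snd q"
      unfolding pair_vecs_def by auto
    moreover have "p \<noteq> q" using \<open>p \<in> P\<close> \<open>q \<in> Q\<close> assms(2) by auto
    ultimately show ?thesis using B_pairs[of p q] B_pairs[of q p] skew[of "snd p" "fst q"] by auto
  qed
  then show "vec.span (pair_vecs Q) \<subseteq> perp B (vec.span (pair_vecs P))"
    unfolding perp_span[symmetric] by (intro vec.span_minimal subspace_perp) (auto simp: perp_span)
next
  have fin: "finite P" "finite Q" using assms(1) unfolding symplectic_pairs_def by auto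
  show "perp B (vec.span (pair_vecs P)) \<subseteq> vec.span (pair_vecs Q)"
  proof
    fix v assume v: "v \<in> perp B (vec.span (pair_vecs P))"
    have "v = sproj (P \<union> Q) v" using sproj_span[OF assms(1)] assms(3) by simp
    also have "\<dots> = sproj P v + sproj Q v"
      unfolding sproj_def using sum.union_disjoint[OF fin assms(2)] by simp
    also have "sproj P v = 0" using v unfolding perp_span by (intro sproj_eq_0) auto
    finally show "v \<in> vec.span (pair_vecs Q)" using sproj_in_span[of Q v] by simp
  qed
qed

lemma nondegenerate_subspace_symplectic_pairs:
  assumes "vec.subspace W" "W \<inter> perp B W = {0}"
  obtains P where "symplectic_pairs P" "vec.span (pair_vecs P) = W"
proof -
  have "symplectic_pairs {}" "pair_vecs {} \<subseteq> W"
    by (simp_all add: symplectic_pairs_def pair_vecs_def)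
  then show ?thesis using symplectic_pairs_extend[OF assms] that by blast
qed

lemma even_dim_nondegenerate_subspace:
  assumes "vec.subspace W" "W \<inter> perp B W = {0}"
  shows "even (vec.dim W)"
proof -
  obtain P where P: "symplectic_pairs P" "vec.span (pair_vecs P) = W"
    using nondegenerate_subspace_symplectic_pairs[OF assms] .
  have "vec.dim W = 2 * card P" using dim_span_pair_vecs[OF P(1)] unfolding P(2) .
  then show ?thesis by simp
qed

definition symplectic_basis :: "(('a ^ 'm) \<times> ('a ^ 'm)) list \<Rightarrow> bool" where
  "symplectic_basis L \<longleftrightarrow>
     distinct L \<and> symplectic_pairs (set L) \<and> vec.span (pair_vecs (set L)) = UNIV"

definition initial_span :: "(('a ^ 'm) \<times> ('a ^ 'm)) list \<Rightarrow> nat \<Rightarrow> ('a ^ 'm) set" where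
  "initial_span L k = vec.span (pair_vecs (set (take k L)))"

lemma exists_symplectic_basis_through:
  assumes "nondegenerate B" "vec.subspace W" "W \<inter> perp B W = {0}"
  obtains L k where "symplectic_basis L" "initial_span L k = W" "vec.dim W = 2 * k"
proof -
  obtain P where P: "symplectic_pairs P" "vec.span (pair_vecs P) = W"
    using nondegenerate_subspace_symplectic_pairs[OF assms(2,3)] .
  have "UNIV \<inter> perp B UNIV = {0}" "pair_vecs P \<subseteq> UNIV"
    using perp_UNIV[OF assms(1)] by simp_all
  then obtain Q where Q: "P \<subseteq> Q" "symplectic_pairs Q" "vec.span (pair_vecs Q) = UNIV"
    using symplectic_pairs_extend[OF vec.subspace_UNIV _ P(1)] by blast
  have "finite P" "finite (Q - P)" using P(1) Q(2) unfolding symplectic_pairs_def by simp_all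
  then obtain L0 L1 where L0: "set L0 = P" "distinct L0" and L1: "set L1 = Q - P" "distinct L1"
    by (meson finite_distinct_list)
  define L where "L = L0 @ L1"
  show ?thesis
  proof
    have "set L = Q" using L0(1) L1(1) Q(1) unfolding L_def by auto
    moreover have "distinct L" using L0 L1 unfolding L_def by auto
    ultimately show "symplectic_basis L" unfolding symplectic_basis_def using Q by simp
    show "initial_span L (length L0) = W" unfolding initial_span_def L_def using L0(1) P(2) by simp
    show "vec.dim W = 2 * length L0"
      using dim_span_pair_vecs[OF P(1)] distinct_card[OF L0(2)] unfolding P(2) L0(1) by simp
  qed
qed

lemma card_symplectic_basis:
  assumes "symplectic_basis L"
  shows "CARD('m) = 2 * length L"
proof -
  have "CARD('m) = vec.dim (vec.span (pair_vecs (set L)))"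
    using assms unfolding symplectic_basis_def by (simp only: vec_dim_card)
  also have "\<dots> = 2 * card (set L)"
    using assms unfolding symplectic_basis_def by (intro dim_span_pair_vecs) simp
  finally show ?thesis using assms unfolding symplectic_basis_def by (simp add: distinct_card)
qed

lemma dim_initial_span:
  assumes "symplectic_basis L" "k \<le> length L"
  shows "vec.dim (initial_span L k) = 2 * k"
proof -
  have "symplectic_pairs (set (take k L))" "distinct (take k L)"
    using assms(1) symplectic_pairs_subset[OF _ set_take_subset]
    unfolding symplectic_basis_def by auto
  then show ?thesis
    unfolding initial_span_def using dim_span_pair_vecs distinct_card assms(2) by force
qed

lemma perp_initial_span:
  assumes "symplectic_basis L"
  shows "perp B (initial_span L k) = vec.span (pair_vecs (set (drop k L)))"
proof -
  have "set L = set (take k L) \<union> set (drop k L)" by (metis append_take_drop_id set_append)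
  moreover have "set (take k L) \<inter> set (drop k L) = {}"
    using assms set_take_disj_set_drop_if_distinct unfolding symplectic_basis_def by blast
  ultimately show ?thesis
    unfolding initial_span_def using assms unfolding symplectic_basis_def
    by (intro perp_span_complement) simp_all
qed

lemma dim_perp_initial_span:
  assumes "symplectic_basis L"
  shows "vec.dim (perp B (initial_span L k)) = 2 * (length L - k)"
proof -
  have "symplectic_pairs (set (drop k L))" "distinct (drop k L)"
    using assms(1) symplectic_pairs_subset[OF _ set_drop_subset]
    unfolding symplectic_basis_def by auto
  then show ?thesis
    unfolding perp_initial_span[OF assms] using dim_span_pair_vecs distinct_card by force
qed

lemma initial_span_mono: "k \<le> k' \<Longrightarrow> initial_span L k \<subseteq> initial_span L k'"
  unfolding initial_span_def pair_vecs_def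
  by (intro vec.span_mono) (use set_take_subset_set_take[of k k' L] in auto)

lemma opposite_initial_span:
  "symplectic_basis L \<Longrightarrow> opposite (initial_span L k) (perp B (initial_span L k))"
  unfolding initial_span_def symplectic_basis_def
  using opposite_span_perp symplectic_pairs_subset[OF _ set_take_subset] by blast

lemma flag_initial_spans:
  assumes "symplectic_basis L"
  shows "flag (initial_span L ` {1..length L - 1})"
  unfolding flag_def
proof (intro conjI ballI)
  fix X assume "X \<in> initial_span L ` {1..length L - 1}"
  then obtain k where "k \<in> {1..length L - 1}" "X = initial_span L k" by auto
  moreover have "vec.subspace (initial_span L k)" unfolding initial_span_def by simp
  ultimately show "vertex X"
    unfolding vertex_def using dim_initial_span[OF assms, of k] card_symplectic_basis[OF assms]
    by auto
next
  fix X Y assume "X \<in> initial_span L ` {1..length L - 1}" "Y \<in> initial_span L ` {1..length L - 1}"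
  then show "X \<subseteq> Y \<or> Y \<subseteq> X" using initial_span_mono nat_le_linear by blast
qed

lemma flag_type_initial_spans:
  assumes "symplectic_basis L" "K \<subseteq> {..length L}"
  shows "flag_type (initial_span L ` K) = (\<lambda>k. 2 * k) ` K"
  unfolding flag_type_def image_image
  using assms dim_initial_span[OF assms(1)] by (intro image_cong) auto

lemma opposite_flags_initial_spans:
  assumes "symplectic_basis L" "K \<subseteq> {..length L}"
  defines "F \<equiv> initial_span L ` K"
  shows "opposite_flags F (perp B ` F)"
  unfolding opposite_flags_def
proof (intro conjI ballI impI)
  have "flag_type (perp B ` F) = (\<lambda>k. 2 * (length L - k)) ` K"
    unfolding flag_type_def F_def image_image using dim_perp_initial_span[OF assms(1)] by simp
  also have "\<dots> = (\<lambda>d. CARD('m) - d) ` ((\<lambda>k. 2 * k) ` K)"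
    unfolding image_image card_symplectic_basis[OF assms(1)] by (simp add: diff_mult_distrib2)
  finally show "flag_type (perp B ` F) = (\<lambda>d. CARD('m) - d) ` flag_type F"
    unfolding F_def flag_type_initial_spans[OF assms(1,2)] .
next
  fix X Y assume "X \<in> F" "Y \<in> perp B ` F" and dims: "vec.dim X + vec.dim Y = CARD('m)"
  then obtain k k' where k: "k \<in> K" "X = initial_span L k"
    and k': "k' \<in> K" "Y = perp B (initial_span L k')"
    unfolding F_def by auto
  have "k \<le> length L" "k' \<le> length L" using k(1) k'(1) assms(2) by auto
  then have "2 * k + 2 * (length L - k') = 2 * length L"
    using dims dim_initial_span[OF assms(1)] dim_perp_initial_span[OF assms(1), of k'] k k'
      card_symplectic_basis[OF assms(1)] by simp
  then have "k = k'" using \<open>k' \<le> length L\<close> by auto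
  then show "opposite X Y" using k k' opposite_initial_span[OF assms(1)] by simp
qed

end

theorem lemma3p4:
  fixes B :: "'a::field ^ 'm \<Rightarrow> 'a ^ 'm \<Rightarrow> 'a" and n :: nat
  assumes "n \<ge> 1" and "CARD('m) = 2 * n"
    and "alt_form B" and "nondegenerate B"
  shows "(\<forall>U::('a ^ 'm) set. vertex U \<and> odd (vec.dim U) \<longrightarrow> \<not> opposite U (perp B U))
       \<and> (\<forall>U::('a ^ 'm) set. vertex U \<and> opposite U (perp B U) \<longrightarrow>
            (\<exists>F. flag F \<and> flag_type F = {2 * k | k. 1 \<le> k \<and> k \<le> n - 1} \<and> U \<in> F
                 \<and> opposite_flags F (perp B ` F)))"
proof -
  interpret alternating_bilinear B using assms(3) by unfold_locales
  have nondeg: "vec.subspace U" "U \<inter> perp B U = {0}"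
    if "vertex U" "opposite U (perp B U)" for U :: "('a ^ 'm) set"
    using that unfolding vertex_def opposite_def by auto
  have odd_not_opposite: "\<not> opposite U (perp B U)"
    if "vertex U" "odd (vec.dim U)" for U :: "('a ^ 'm) set"
    using that even_dim_nondegenerate_subspace[OF nondeg[OF that(1)]] by blast
  have "\<exists>F. flag F \<and> flag_type F = {2 * k | k. 1 \<le> k \<and> k \<le> n - 1} \<and> U \<in> F
            \<and> opposite_flags F (perp B ` F)"
    if U: "vertex U" "opposite U (perp B U)" for U :: "('a ^ 'm) set"
  proof -
    obtain L k where L: "symplectic_basis L" "initial_span L k = U" "vec.dim U = 2 * k"
      using exists_symplectic_basis_through[OF assms(4) nondeg[OF U]] .
    have n: "length L = n" using card_symplectic_basis[OF L(1)] assms(2) by simp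
    then have K: "{1..n - 1} \<subseteq> {..length L}" by auto
    have "k \<in> {1..n - 1}" using U(1) L(3) assms(2) unfolding vertex_def by auto
    then have "U \<in> initial_span L ` {1..n - 1}" using L(2) by blast
    moreover have "flag (initial_span L ` {1..n - 1})" using flag_initial_spans[OF L(1)] n by simp
    moreover have "flag_type (initial_span L ` {1..n - 1}) = {2 * k | k. 1 \<le> k \<and> k \<le> n - 1}"
      unfolding flag_type_initial_spans[OF L(1) K] by auto
    ultimately show ?thesis using opposite_flags_initial_spans[OF L(1) K] by blast
  qed
  then show ?thesis using odd_not_opposite by blast
qed

end
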